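(* Let $\gamma$ be a future-directed timelike curve in $M$. Then every $\bar P\in\bar M$ of the form $\bar P=(I^-[\gamma],P^* )$ is a future endpoint of $\gamma$ in $(\bar M,\bar{\mathcal T})$: every $\bar{\mathcal T}$-open set containing $\bar P$ contains $\Phi$ of some final (future) segment of $\gamma$.
   Context: Let $M$ be a strongly causal spacetime (a time-oriented Lorentzian manifold in which every point has a neighbourhood that no non-spacelike curve enters more than once). $I^\pm(p)$ denotes the chronological future/past of $p\in M$, $I^\pm(S)=\bigcup_{s\in S}I^\pm(s)$, and for a curve $\gamma$ we write $I^\pm[\gamma]=I^\pm(\gamma)$. A past-set is a set $I^-(S)$ with $S\subset M$. An IP is a nonempty past-set that is not the union of two proper subsets which are past-sets. IFs are defined dually. Every set $I^-[\gamma]$ with $\gamma$ timelike is an IP. For an IP $P$, $f(P)=I^+(\{x:P\subset I^-(x)\})$. For an IF $P^*$, $p(P^* )=I^-(\{x:P^*\subset I^+(x)\})$. $R_{pf}$ is the set of pairs $(P,Q^* )$ (with $P$ an IP and $Q^*$ an IF) such that both of the following hold: - $Q^*$ is a maximal IF (under inclusion) contained in $f(P)$; - $P$ is a maximal IP contained in $p(Q^* )$. $\bar M$ is the set of pairs $\bar P=(P,P^* )$ such that one of the following holds: - $(P,P^* )\in R_{pf}$; - $P=\emptyset$ and $P^*$ is an IF occurring in no pair of $R_{pf}$; - $P^*=\emptyset$ and $P$ is an IP occurring in no pair of $R_{pf}$. $\Phi(p)=(I^-(p),I^+(p))$ is an injection $M\to\bar M$. Limits of sets: for past-sets $P_n$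 and $Q$, $Q=\lim P_n$ means both of the following: - (i) each $x\in Q$ lies in $P_n$ for all sufficiently large $n$; - (ii) for each $x\in M$ with $I^-(x)\not\subset Q$, one has $I^-(x)\not\subset P_n$ for all sufficiently large $n$. Limits of future-sets are defined dually. For $\bar S\subset\bar M$ define: - $L^+_{IF}(\bar S)=\{\bar Q:Q^*\ne\emptyset,\ Q^*\subset\bigcup_{\bar P\in\bar S}P^*\}$; - $L^-_{IP}(\bar S)=\{\bar Q:Q\ne\emptyset,\ Q\subset\bigcup_{\bar P\in\bar S}P\}$; - $Cl_{FB}(\bar S)=\bar S\cup\{\bar Q:Q^*=\emptyset,\ Q=\lim P_n\text{ for some sequence }\bar P_n\in\bar S\}$; - $Cl_{PB}(\bar S)=\bar S\cup\{\bar Q:Q=\emptyset,\ Q^*=\lim P_n^*\text{ for some sequence }\bar P_n\in\bar S\}$; - $L^+(\bar S)=Cl_{FB}[\bar S\cup L^+_{IF}(\bar S)]$; - $L^-(\bar S)=Cl_{PB}[\bar S\cup L^-_{IP}(\bar S)]$. $\bar{\mathcal T}$ is the coarsest topology on $\bar M$ in which $\bar M\setminus L^\pm(\bar S)$ are open for every $\bar S\subset\bar M$. *)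

theory Defs
  imports "HOL-Analysis.Analysis"
begin

text \<open>The spacetime M is modelled as a Hausdorff
topological space (the type 'a) together with its chronology relation
chr p q  (meaning  p << q, i.e. q lies in the chronological future of p).\<close>

definition Ipast :: "('a \<Rightarrow> 'a \<Rightarrow> bool) \<Rightarrow> 'a \<Rightarrow> 'a set" where
  "Ipast chr p = {q. chr q p}"

definition Ifut :: "('a \<Rightarrow> 'a \<Rightarrow> bool) \<Rightarrow> 'a \<Rightarrow> 'a set" where
  "Ifut chr p = {q. chr p q}"

definition IpastS :: "('a \<Rightarrow> 'a \<Rightarrow> bool) \<Rightarrow> 'a set \<Rightarrow> 'a set" where
  "IpastS chr S = (\<Union>s\<in>S. Ipast chr s)"

definition IfutS :: "('a \<Rightarrow> 'a \<Rightarrow> bool) \<Rightarrow> 'a set \<Rightarrow> 'a set" where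
  "IfutS chr S = (\<Union>s\<in>S. Ifut chr s)"

definition past_set :: "('a \<Rightarrow> 'a \<Rightarrow> bool) \<Rightarrow> 'a set \<Rightarrow> bool" where
  "past_set chr A \<longleftrightarrow> (\<exists>S. A = IpastS chr S)"

definition future_set :: "('a \<Rightarrow> 'a \<Rightarrow> bool) \<Rightarrow> 'a set \<Rightarrow> bool" where
  "future_set chr A \<longleftrightarrow> (\<exists>S. A = IfutS chr S)"

definition IP :: "('a \<Rightarrow> 'a \<Rightarrow> bool) \<Rightarrow> 'a set \<Rightarrow> bool" where
  "IP chr A \<longleftrightarrow> A \<noteq> {} \<and> past_set chr A \<and>
     \<not> (\<exists>B C. past_set chr B \<and> past_set chr C \<and> B \<subset> A \<and> C \<subset> A \<and> A = B \<union> C)"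

definition IF :: "('a \<Rightarrow> 'a \<Rightarrow> bool) \<Rightarrow> 'a set \<Rightarrow> bool" where
  "IF chr A \<longleftrightarrow> A \<noteq> {} \<and> future_set chr A \<and>
     \<not> (\<exists>B C. future_set chr B \<and> future_set chr C \<and> B \<subset> A \<and> C \<subset> A \<and> A = B \<union> C)"

definition fP :: "('a \<Rightarrow> 'a \<Rightarrow> bool) \<Rightarrow> 'a set \<Rightarrow> 'a set" where
  "fP chr P = IfutS chr {x. P \<subseteq> Ipast chr x}"

definition pF :: "('a \<Rightarrow> 'a \<Rightarrow> bool) \<Rightarrow> 'a set \<Rightarrow> 'a set" where
  "pF chr F = IpastS chr {x. F \<subseteq> Ifut chr x}"

definition Rpf :: "('a \<Rightarrow> 'a \<Rightarrow> bool) \<Rightarrow> ('a set \<times> 'a set) set" where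
  "Rpf chr = {(P, Q). IP chr P \<and> IF chr Q \<and>
      Q \<subseteq> fP chr P \<and> (\<forall>Q'. IF chr Q' \<and> Q' \<subseteq> fP chr P \<and> Q \<subseteq> Q' \<longrightarrow> Q' = Q) \<and>
      P \<subseteq> pF chr Q \<and> (\<forall>P'. IP chr P' \<and> P' \<subseteq> pF chr Q \<and> P \<subseteq> P' \<longrightarrow> P' = P)}"

definition barM :: "('a \<Rightarrow> 'a \<Rightarrow> bool) \<Rightarrow> ('a set \<times> 'a set) set" where
  "barM chr = Rpf chr
     \<union> {(P, F). P = {} \<and> IF chr F \<and> \<not> (\<exists>P'. (P', F) \<in> Rpf chr)}
     \<union> {(P, F). F = {} \<and> IP chr P \<and> \<not> (\<exists>F'. (P, F') \<in> Rpf chr)}"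

definition Phi :: "('a \<Rightarrow> 'a \<Rightarrow> bool) \<Rightarrow> 'a \<Rightarrow> 'a set \<times> 'a set" where
  "Phi chr p = (Ipast chr p, Ifut chr p)"

definition past_lim :: "('a \<Rightarrow> 'a \<Rightarrow> bool) \<Rightarrow> 'a set \<Rightarrow> (nat \<Rightarrow> 'a set) \<Rightarrow> bool" where
  "past_lim chr Q Ps \<longleftrightarrow>
     (\<forall>x\<in>Q. \<forall>\<^sub>F n in sequentially. x \<in> Ps n) \<and>
     (\<forall>x. \<not> Ipast chr x \<subseteq> Q \<longrightarrow> (\<forall>\<^sub>F n in sequentially. \<not> Ipast chr x \<subseteq> Ps n))"

definition fut_lim :: "('a \<Rightarrow> 'a \<Rightarrow> bool) \<Rightarrow> 'a set \<Rightarrow> (nat \<Rightarrow> 'a set) \<Rightarrow> bool" where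
  "fut_lim chr Q Ps \<longleftrightarrow>
     (\<forall>x\<in>Q. \<forall>\<^sub>F n in sequentially. x \<in> Ps n) \<and>
     (\<forall>x. \<not> Ifut chr x \<subseteq> Q \<longrightarrow> (\<forall>\<^sub>F n in sequentially. \<not> Ifut chr x \<subseteq> Ps n))"

definition L_IF :: "('a \<Rightarrow> 'a \<Rightarrow> bool) \<Rightarrow> ('a set \<times> 'a set) set \<Rightarrow> ('a set \<times> 'a set) set" where
  "L_IF chr S = {Q \<in> barM chr. snd Q \<noteq> {} \<and> snd Q \<subseteq> (\<Union>P\<in>S. snd P)}"

definition L_IP :: "('a \<Rightarrow> 'a \<Rightarrow> bool) \<Rightarrow> ('a set \<times> 'a set) set \<Rightarrow> ('a set \<times> 'a set) set" where
  "L_IP chr S = {Q \<in> barM chr. fst Q \<noteq> {} \<and> fst Q \<subseteq> (\<Union>P\<in>S. fst P)}"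

definition Cl_FB :: "('a \<Rightarrow> 'a \<Rightarrow> bool) \<Rightarrow> ('a set \<times> 'a set) set \<Rightarrow> ('a set \<times> 'a set) set" where
  "Cl_FB chr S = S \<union> {Q \<in> barM chr. snd Q = {} \<and>
      (\<exists>Ps. (\<forall>n. Ps n \<in> S) \<and> past_lim chr (fst Q) (\<lambda>n. fst (Ps n)))}"

definition Cl_PB :: "('a \<Rightarrow> 'a \<Rightarrow> bool) \<Rightarrow> ('a set \<times> 'a set) set \<Rightarrow> ('a set \<times> 'a set) set" where
  "Cl_PB chr S = S \<union> {Q \<in> barM chr. fst Q = {} \<and>
      (\<exists>Ps. (\<forall>n. Ps n \<in> S) \<and> fut_lim chr (snd Q) (\<lambda>n. snd (Ps n)))}"

definition Lplus :: "('a \<Rightarrow> 'a \<Rightarrow> bool) \<Rightarrow> ('a set \<times> 'a set) set \<Rightarrow> ('a set \<times> 'a set) set" where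
  "Lplus chr S = Cl_FB chr (S \<union> L_IF chr S)"

definition Lminus :: "('a \<Rightarrow> 'a \<Rightarrow> bool) \<Rightarrow> ('a set \<times> 'a set) set \<Rightarrow> ('a set \<times> 'a set) set" where
  "Lminus chr S = Cl_PB chr (S \<union> L_IP chr S)"

definition barT :: "('a \<Rightarrow> 'a \<Rightarrow> bool) \<Rightarrow> ('a set \<times> 'a set) topology" where
  "barT chr = topology_generated_by
     ({barM chr - Lplus chr S | S. S \<subseteq> barM chr} \<union> {barM chr - Lminus chr S | S. S \<subseteq> barM chr})"

definition strongly_causal_chronology :: "('a::topological_space \<Rightarrow> 'a \<Rightarrow> bool) \<Rightarrow> bool" where
  "strongly_causal_chronology chr \<longleftrightarrow>
     (\<forall>p q r. chr p q \<longrightarrow> chr q r \<longrightarrow> chr p r) \<and>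
     (\<forall>p. \<not> chr p p) \<and>
     (\<forall>p. open (Ipast chr p) \<and> open (Ifut chr p)) \<and>
     (\<forall>p. Ipast chr p \<noteq> {} \<and> Ifut chr p \<noteq> {}) \<and>
     (\<forall>p q. chr p q \<longrightarrow> (\<exists>r. chr p r \<and> chr r q)) \<and>
     \<comment> \<open>strong causality: the Alexandrov sets form a neighbourhood base\<close>
     (\<forall>U p. open U \<and> p \<in> U \<longrightarrow> (\<exists>x y. chr x p \<and> chr p y \<and> Ifut chr x \<inter> Ipast chr y \<subseteq> U)) \<and>
     (\<forall>p. Phi chr p \<in> barM chr) \<and> inj (Phi chr)"

text \<open>Future-directed timelike curve, parametrised on an interval D of reals
without a largest element (so that "future end" makes sense).\<close>
definition fd_timelike_curve :: "('a::topological_space \<Rightarrow> 'a \<Rightarrow> bool) \<Rightarrow> real set \<Rightarrow> (real \<Rightarrow> 'a) \<Rightarrow> bool" where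
  "fd_timelike_curve chr D \<gamma> \<longleftrightarrow>
     is_interval D \<and> D \<noteq> {} \<and> (\<forall>t\<in>D. \<exists>s\<in>D. t < s) \<and>
     continuous_on D \<gamma> \<and> (\<forall>s\<in>D. \<forall>t\<in>D. s < t \<longrightarrow> chr (\<gamma> s) (\<gamma> t))"

end

theory Submission
  imports Defs
begin

text \<open>Write G for the past of the curve and P* for the future component of the given point.
Since final segments of the curve are closed under finite intersections, it suffices to consider
the subbasic open sets that contain the point and have the form M - L+(S) or M - L-(S).
Suppose Phi(gamma t) lies in L-(S) for arbitrarily late t. Since G is the union of the pasts of
late curve points, G is covered by the pasts in S, so the point lies in L-_IP(S).
Suppose instead Phi(gamma t) lies in L+(S) for arbitrarily late t. If P* is nonempty, the point
lies in R_pf, so P* is contained in f(G). This lies in the future of every curve point, so the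
point lies in L+_IF(S). If P* is empty, G is the limit of the pasts of the curve along a cofinal
sequence of such times, so the point lies in Cl_FB.\<close>

lemma eventually_in_open_generated_by:
  assumes basis: "\<And>b. b \<in> B \<Longrightarrow> x \<in> b \<Longrightarrow> eventually (\<lambda>y. f y \<in> b) F"
    and "openin (topology_generated_by B) U" and "x \<in> U"
  shows "eventually (\<lambda>y. f y \<in> U) F"
proof -
  have "generate_topology_on B U"
    using assms(2) by (rule openin_topology_generated_by)
  then show ?thesis
    using \<open>x \<in> U\<close>
  proof (induction rule: generate_topology_on.induct)
    case Empty
    then show ?case by simp
  next
    case (Int a b)
    then show ?case by (auto intro: eventually_conj)
  next
    case (UN K)
    then obtain k where "k \<in> K" "x \<in> k" by blast
    then have "eventually (\<lambda>y. f y \<in> k) F" by (rule UN.IH)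
    then show ?case by (rule eventually_mono) (use \<open>k \<in> K\<close> in blast)
  next
    case (Basis b)
    then show ?case by (rule basis)
  qed
qed

definition final_segments :: "'a::linorder set \<Rightarrow> 'a filter" where
  "final_segments D = (INF t0\<in>D. principal {t\<in>D. t0 \<le> t})"

lemma eventually_final_segments:
  assumes "D \<noteq> {}"
  shows "eventually P (final_segments D) \<longleftrightarrow> (\<exists>t0\<in>D. \<forall>t\<in>D. t0 \<le> t \<longrightarrow> P t)"
proof -
  have "\<exists>c\<in>D. principal {t\<in>D. c \<le> t} \<le> inf (principal {t\<in>D. a \<le> t}) (principal {t\<in>D. b \<le> t})"
    if "a \<in> D" "b \<in> D" for a b
    using that by (intro bexI[of _ "max a b"]) (auto simp: max_def)
  then show ?thesis
    unfolding final_segments_def using assms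
    by (subst eventually_INF_base) (auto simp: eventually_principal)
qed

lemma frequently_final_segments:
  assumes "D \<noteq> {}"
  shows "frequently P (final_segments D) \<longleftrightarrow> (\<forall>t0\<in>D. \<exists>t\<in>D. t0 \<le> t \<and> P t)"
  unfolding frequently_def eventually_final_segments[OF assms] by blast

lemma cofinal_sequence:
  fixes D :: "real set"
  assumes "D \<noteq> {}" and no_max: "\<forall>t\<in>D. \<exists>s\<in>D. t < s"
  obtains s where "\<And>n. s n \<in> D" "\<And>t. t \<in> D \<Longrightarrow> eventually (\<lambda>n. t < s n) sequentially"
proof (cases "bdd_above D")
  case True
  obtain s where s: "\<And>n. s n \<in> D" "s \<longlonglongrightarrow> Sup D"
    using closure_contains_Sup[OF assms(1) True] closure_sequential by metis
  have "t < Sup D" if "t \<in> D" for t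
    using no_max that cSup_upper[OF _ True] by (meson less_le_trans)
  then show ?thesis
    using that s by (blast intro: order_tendstoD(1))
next
  case False
  then have "\<forall>n. \<exists>t\<in>D. real n \<le> t"
    unfolding bdd_above_def by (meson linear)
  then obtain s where s: "\<And>n. s n \<in> D" "\<And>n. real n \<le> s n"
    by metis
  have "filterlim s at_top sequentially"
    by (rule filterlim_at_top_mono[OF filterlim_real_sequentially]) (simp add: s(2))
  then have "eventually (\<lambda>n. t < s n) sequentially" for t
    by (simp add: filterlim_at_top_dense)
  with s(1) show ?thesis
    using that by blast
qed

lemma frequently_final_segments_sequence:
  fixes D :: "real set"
  assumes "D \<noteq> {}" "\<forall>t\<in>D. \<exists>s\<in>D. t < s" and "frequently P (final_segments D)"
  obtains tt where "\<And>n. P (tt n)" and "filterlim tt (final_segments D) sequentially"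
proof -
  obtain s where s: "\<And>n. s n \<in> D" "\<And>t. t \<in> D \<Longrightarrow> eventually (\<lambda>n. t < s n) sequentially"
    using cofinal_sequence[OF assms(1,2)] by blast
  have "\<forall>n. \<exists>t\<in>D. s n \<le> t \<and> P t"
    using assms(3) s(1) unfolding frequently_final_segments[OF assms(1)] by blast
  then obtain tt where tt: "\<And>n. tt n \<in> D" "\<And>n. s n \<le> tt n" "\<And>n. P (tt n)"
    by metis
  have "filterlim tt (final_segments D) sequentially"
    unfolding filterlim_iff eventually_final_segments[OF assms(1)]
  proof (intro allI impI)
    fix Q assume "\<exists>t0\<in>D. \<forall>t\<in>D. t0 \<le> t \<longrightarrow> Q t"
    then obtain t0 where "t0 \<in> D" and Q: "\<forall>t\<in>D. t0 \<le> t \<longrightarrow> Q t" by blast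
    from s(2)[OF \<open>t0 \<in> D\<close>] show "eventually (\<lambda>n. Q (tt n)) sequentially"
    proof (rule eventually_mono)
      fix n assume "t0 < s n"
      with tt(2)[of n] have "t0 \<le> tt n" by linarith
      with Q tt(1) show "Q (tt n)" by blast
    qed
  qed
  with tt(3) that show ?thesis by blast
qed

lemma strongly_causal_chronologyD:
  assumes "strongly_causal_chronology chr"
  shows "transp chr" "Ipast chr p \<noteq> {}" "Ifut chr p \<noteq> {}" "Phi chr p \<in> barM chr"
  using assms unfolding strongly_causal_chronology_def by (auto intro: transpI)

lemma fd_timelike_curveD:
  assumes "fd_timelike_curve chr D \<gamma>"
  shows "D \<noteq> {}" "\<forall>t\<in>D. \<exists>s\<in>D. t < s"
    and "s \<in> D \<Longrightarrow> t \<in> D \<Longrightarrow> s < t \<Longrightarrow> chr (\<gamma> s) (\<gamma> t)"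
  using assms unfolding fd_timelike_curve_def by auto

lemma Phi_in_LplusD:
  assumes "Ifut chr p \<noteq> {}" and "Phi chr p \<in> Lplus chr S"
  shows "Phi chr p \<in> S \<union> L_IF chr S"
  using assms unfolding Lplus_def Cl_FB_def Phi_def by auto

lemma Phi_in_LminusD:
  assumes "Ipast chr p \<noteq> {}" and "Phi chr p \<in> Lminus chr S"
  shows "Ipast chr p \<subseteq> (\<Union>Q\<in>S. fst Q)"
  using assms unfolding Lminus_def Cl_PB_def L_IP_def Phi_def by auto

lemma nonempty_barM_in_Rpf:
  assumes "Q \<in> barM chr" "fst Q \<noteq> {}" "snd Q \<noteq> {}"
  shows "Q \<in> Rpf chr"
  using assms unfolding barM_def by auto

lemma Rpf_snd_subset_fP:
  assumes "Q \<in> Rpf chr"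
  shows "snd Q \<subseteq> fP chr (fst Q)"
  using assms unfolding Rpf_def by auto

lemma fP_subset_Ifut:
  assumes "transp chr" "p \<in> P"
  shows "fP chr P \<subseteq> Ifut chr p"
  using assms unfolding fP_def IfutS_def Ifut_def Ipast_def by (blast dest: transpD)

context
  fixes chr :: "'a::topological_space \<Rightarrow> 'a \<Rightarrow> bool" and D :: "real set" and \<gamma> :: "real \<Rightarrow> 'a"
  assumes trans: "transp chr" and curve: "fd_timelike_curve chr D \<gamma>"
begin

lemma Ipast_curve_point_subset:
  assumes "t \<in> D"
  shows "Ipast chr (\<gamma> t) \<subseteq> IpastS chr (\<gamma> ` D)"
proof
  fix x assume "x \<in> Ipast chr (\<gamma> t)"
  obtain s where "s \<in> D" "t < s"
    using fd_timelike_curveD(2)[OF curve] assms by blast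
  then have "chr x (\<gamma> s)"
    using \<open>x \<in> Ipast chr (\<gamma> t)\<close> fd_timelike_curveD(3)[OF curve assms] trans
    unfolding Ipast_def by (blast dest: transpD)
  with \<open>s \<in> D\<close> show "x \<in> IpastS chr (\<gamma> ` D)"
    unfolding IpastS_def Ipast_def by blast
qed

lemma curve_point_in_IpastS:
  assumes "t \<in> D"
  shows "\<gamma> t \<in> IpastS chr (\<gamma> ` D)"
proof -
  obtain s where "s \<in> D" "t < s"
    using fd_timelike_curveD(2)[OF curve] assms by blast
  then show ?thesis
    using fd_timelike_curveD(3)[OF curve assms] unfolding IpastS_def Ipast_def by blast
qed

lemma IpastS_curve_nonempty: "IpastS chr (\<gamma> ` D) \<noteq> {}"
  using curve_point_in_IpastS fd_timelike_curveD(1)[OF curve] by blast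

lemma eventually_in_Ipast_curve:
  assumes "x \<in> IpastS chr (\<gamma> ` D)"
  shows "eventually (\<lambda>t. x \<in> Ipast chr (\<gamma> t)) (final_segments D)"
proof -
  obtain u where "u \<in> D" "chr x (\<gamma> u)"
    using assms unfolding IpastS_def Ipast_def by blast
  have "chr x (\<gamma> t)" if "t \<in> D" "u \<le> t" for t
  proof (cases "u = t")
    case True
    with \<open>chr x (\<gamma> u)\<close> show ?thesis by simp
  next
    case False
    with that \<open>u \<in> D\<close> have "chr (\<gamma> u) (\<gamma> t)"
      by (simp add: fd_timelike_curveD(3)[OF curve])
    with \<open>chr x (\<gamma> u)\<close> show ?thesis
      by (rule transpD[OF trans])
  qed
  with \<open>u \<in> D\<close> show ?thesis
    unfolding eventually_final_segments[OF fd_timelike_curveD(1)[OF curve]] Ipast_def by blast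
qed

lemma past_lim_along_curve:
  assumes lim: "filterlim tt (final_segments D) sequentially"
  shows "past_lim chr (IpastS chr (\<gamma> ` D)) (\<lambda>n. Ipast chr (\<gamma> (tt n)))"
  unfolding past_lim_def
proof (intro conjI ballI allI impI)
  fix x assume "x \<in> IpastS chr (\<gamma> ` D)"
  then have "eventually (\<lambda>t. x \<in> Ipast chr (\<gamma> t)) (final_segments D)"
    by (rule eventually_in_Ipast_curve)
  from this lim show "eventually (\<lambda>n. x \<in> Ipast chr (\<gamma> (tt n))) sequentially"
    by (rule eventually_compose_filterlim)
next
  fix x assume x: "\<not> Ipast chr x \<subseteq> IpastS chr (\<gamma> ` D)"
  have "eventually (\<lambda>t. t \<in> D) (final_segments D)"
    unfolding eventually_final_segments[OF fd_timelike_curveD(1)[OF curve]]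
    using fd_timelike_curveD(1)[OF curve] by blast
  from this lim have "eventually (\<lambda>n. tt n \<in> D) sequentially"
    by (rule eventually_compose_filterlim)
  then show "eventually (\<lambda>n. \<not> Ipast chr x \<subseteq> Ipast chr (\<gamma> (tt n))) sequentially"
    by (rule eventually_mono) (use x Ipast_curve_point_subset in blast)
qed

context
  fixes Pbar :: "'a set \<times> 'a set"
  assumes Ipast_nonempty: "\<And>p. Ipast chr p \<noteq> {}" and Ifut_nonempty: "\<And>p. Ifut chr p \<noteq> {}"
    and Phi_in_barM: "\<And>p. Phi chr p \<in> barM chr"
    and Pbar: "Pbar \<in> barM chr" "fst Pbar = IpastS chr (\<gamma> ` D)"
begin

lemma curve_eventually_not_in_Lplus:
  assumes "Pbar \<notin> Lplus chr S"
  shows "eventually (\<lambda>t. Phi chr (\<gamma> t) \<notin> Lplus chr S) (final_segments D)"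
proof (rule ccontr)
  assume "\<not> ?thesis"
  then have "frequently (\<lambda>t. Phi chr (\<gamma> t) \<in> Lplus chr S) (final_segments D)"
    by (simp add: not_eventually)
  then have late: "frequently (\<lambda>t. Phi chr (\<gamma> t) \<in> S \<union> L_IF chr S) (final_segments D)"
    by (rule frequently_elim1) (rule Phi_in_LplusD[OF Ifut_nonempty])
  show False
  proof (cases "snd Pbar = {}")
    case False
    obtain t where t: "t \<in> D" "Phi chr (\<gamma> t) \<in> S \<union> L_IF chr S"
      using late fd_timelike_curveD(1)[OF curve]
      unfolding frequently_final_segments[OF fd_timelike_curveD(1)[OF curve]] by blast
    have "\<gamma> t \<in> fst Pbar"
      unfolding Pbar(2) by (rule curve_point_in_IpastS[OF t(1)])
    then have "fst Pbar \<noteq> {}" by blast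
    from nonempty_barM_in_Rpf[OF Pbar(1) this False]
    have "snd Pbar \<subseteq> fP chr (fst Pbar)"
      by (rule Rpf_snd_subset_fP)
    also have "\<dots> \<subseteq> Ifut chr (\<gamma> t)"
      by (rule fP_subset_Ifut[OF trans \<open>\<gamma> t \<in> fst Pbar\<close>])
    also have "\<dots> \<subseteq> (\<Union>Q\<in>S. snd Q)"
      using t(2) unfolding L_IF_def Phi_def by force
    finally have "Pbar \<in> L_IF chr S"
      unfolding L_IF_def using Pbar(1) False by simp
    with assms show False unfolding Lplus_def Cl_FB_def by blast
  next
    case True
    obtain tt where tt: "\<And>n. Phi chr (\<gamma> (tt n)) \<in> S \<union> L_IF chr S"
      and lim: "filterlim tt (final_segments D) sequentially"
      using frequently_final_segments_sequence[OF fd_timelike_curveD(1,2)[OF curve] late] by blast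
    have "past_lim chr (fst Pbar) (\<lambda>n. fst (Phi chr (\<gamma> (tt n))))"
      using past_lim_along_curve[OF lim] Pbar(2)
      by (simp add: Phi_def)
    then have "\<exists>Ps. (\<forall>n. Ps n \<in> S \<union> L_IF chr S) \<and> past_lim chr (fst Pbar) (\<lambda>n. fst (Ps n))"
      using tt by (intro exI[of _ "\<lambda>n. Phi chr (\<gamma> (tt n))"]) simp
    then have "Pbar \<in> Cl_FB chr (S \<union> L_IF chr S)"
      unfolding Cl_FB_def using Pbar(1) True by blast
    with assms show False unfolding Lplus_def by blast
  qed
qed

lemma curve_eventually_not_in_Lminus:
  assumes "Pbar \<notin> Lminus chr S"
  shows "eventually (\<lambda>t. Phi chr (\<gamma> t) \<notin> Lminus chr S) (final_segments D)"
proof (rule ccontr)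
  assume "\<not> ?thesis"
  then have late: "frequently (\<lambda>t. Phi chr (\<gamma> t) \<in> Lminus chr S) (final_segments D)"
    by (simp add: not_eventually)
  have "fst Pbar \<subseteq> (\<Union>Q\<in>S. fst Q)"
  proof
    fix x assume "x \<in> fst Pbar"
    with Pbar(2) have "eventually (\<lambda>t. x \<in> Ipast chr (\<gamma> t)) (final_segments D)"
      using eventually_in_Ipast_curve by simp
    with late have "frequently (\<lambda>t. x \<in> Ipast chr (\<gamma> t) \<and> Phi chr (\<gamma> t) \<in> Lminus chr S) (final_segments D)"
      by (rule frequently_eventually_conj)
    then obtain t where "x \<in> Ipast chr (\<gamma> t)" "Phi chr (\<gamma> t) \<in> Lminus chr S"
      using frequently_ex by blast
    then show "x \<in> (\<Union>Q\<in>S. fst Q)"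
      using Phi_in_LminusD[OF Ipast_nonempty] by blast
  qed
  then have "Pbar \<in> L_IP chr S"
    using Pbar IpastS_curve_nonempty unfolding L_IP_def by simp
  with assms show False unfolding Lminus_def Cl_PB_def by blast
qed

lemma curve_eventually_in_subbasic:
  assumes "b \<in> {barM chr - Lplus chr S | S. S \<subseteq> barM chr} \<union> {barM chr - Lminus chr S | S. S \<subseteq> barM chr}"
    and "Pbar \<in> b"
  shows "eventually (\<lambda>t. Phi chr (\<gamma> t) \<in> b) (final_segments D)"
proof -
  obtain S where "b = barM chr - Lplus chr S \<or> b = barM chr - Lminus chr S"
    using assms(1) by blast
  then show ?thesis
  proof
    assume b: "b = barM chr - Lplus chr S"
    with assms(2) have "Pbar \<notin> Lplus chr S" by blast
    then show ?thesis
      unfolding b by (rule eventually_mono[OF curve_eventually_not_in_Lplus])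
        (simp add: Phi_in_barM)
  next
    assume b: "b = barM chr - Lminus chr S"
    with assms(2) have "Pbar \<notin> Lminus chr S" by blast
    then show ?thesis
      unfolding b by (rule eventually_mono[OF curve_eventually_not_in_Lminus])
        (simp add: Phi_in_barM)
  qed
qed

end

end

theorem theorem7:
  fixes chr :: "'a::t2_space \<Rightarrow> 'a \<Rightarrow> bool"
    and D :: "real set" and \<gamma> :: "real \<Rightarrow> 'a" and Pbar :: "'a set \<times> 'a set"
  assumes "strongly_causal_chronology chr"
    and "fd_timelike_curve chr D \<gamma>"
    and "Pbar \<in> barM chr"
    and "fst Pbar = IpastS chr (\<gamma> ` D)"
  shows "\<forall>U. openin (barT chr) U \<and> Pbar \<in> U \<longrightarrow>
           (\<exists>t0\<in>D. \<forall>t\<in>D. t0 \<le> t \<longrightarrow> Phi chr (\<gamma> t) \<in> U)"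
proof (intro allI impI, elim conjE)
  fix U assume U: "openin (barT chr) U" "Pbar \<in> U"
  have "eventually (\<lambda>t. Phi chr (\<gamma> t) \<in> U) (final_segments D)"
    using curve_eventually_in_subbasic[OF strongly_causal_chronologyD(1)[OF assms(1)] assms(2)
      strongly_causal_chronologyD(2-4)[OF assms(1)] assms(3,4)] U[unfolded barT_def]
    by (rule eventually_in_open_generated_by)
  then show "\<exists>t0\<in>D. \<forall>t\<in>D. t0 \<le> t \<longrightarrow> Phi chr (\<gamma> t) \<in> U"
    by (rule iffD1[OF eventually_final_segments[OF fd_timelike_curveD(1)[OF assms(2)]]])
qed

end
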